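(* Suppose $K\ge c_{\mathsf k}H\log^4\frac{KS(A+B)}{\delta}$ for a sufficiently large universal constant $c_{\mathsf k}$, and the bonus constant $c_{\mathsf b}$ in Nash-Q-FTRL is a sufficiently large universal constant. Then with probability at least $1-\delta$, $\overline V_h(s)\ge\overline V_h^{\star,\widehat\nu}(s)$ for all $s\in\mathcal S$ and all $1\le h\le H$.
   Context: Markov game with states $\mathcal S$ ($|\mathcal S|=S$), actions $\mathcal A$ ($A$) and $\mathcal B$ ($B$), horizon $H$, rewards $r_h(s,a,b)\in[0,1]$, transitions $P_h(\cdot\mid s,a,b)$; $\delta\in(0,1)$. Notation $\alpha_i^k=\alpha_i\prod_{j=i+1}^k(1-\alpha_j)$ ($i<k$), $\alpha_k^k=\alpha_k$; $\mathsf{Var}_\pi(f)=\sum_a\pi(a)(f(a)-\sum_{a'}\pi(a')f(a'))^2$. Algorithm Nash-Q-FTRL (learning rates $\alpha_k=\frac{c_\alpha\log K}{k-1+c_\alpha\log K}$, $c_\alpha\ge24$; $\eta_{k+1}=\sqrt{\log K/(\alpha_kH)}$). Initialize $\overline V_{H+1}=\underline V_{H+1}=0$, $\overline Q_h^0=0$, $\underline Q_h^0=0$, $\mu_h^1,\nu_h^1$ uniform. For $h=H,\dots,1$, for $k=1,\dots,K$: (i) for each $(s,a)$ draw independently $b\sim\nu_h^k(\cdot\mid s)$, $s'\sim P_h(\cdot\mid s,a,b)$, set $\overline r_h^k(s,a)=r_h(s,a,b)$, $\overline P_h^k(\cdot\mid s,a)=\delta_{s'}$; for each $(s,b)$ draw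 independently $a\sim\mu_h^k(\cdot\mid s)$, $s'\sim P_h(\cdot\mid s,a,b)$, set $\underline r_h^k(s,b)=r_h(s,a,b)$, $\underline P_h^k(\cdot\mid s,b)=\delta_{s'}$; (ii) $\overline q_h^k=\overline r_h^k+\overline P_h^k\overline V_{h+1}$, $\underline q_h^k=\underline r_h^k+\underline P_h^k\underline V_{h+1}$, $\overline Q_h^k=(1-\alpha_k)\overline Q_h^{k-1}+\alpha_k\overline q_h^k$, $\underline Q_h^k=(1-\alpha_k)\underline Q_h^{k-1}+\alpha_k\underline q_h^k$; (iii) $\mu_h^{k+1}(a\mid s)\propto\exp(\eta_{k+1}\overline Q_h^k(s,a))$, $\nu_h^{k+1}(b\mid s)\propto\exp(-\eta_{k+1}\underline Q_h^k(s,b))$. Then $\widehat\mu_h=\sum_k\alpha_k^K\mu_h^k$, $\widehat\nu_h=\sum_k\alpha_k^K\nu_h^k$, $\overline V_h(s)=\min\{\sum_k\alpha_k^K\langle\mu_h^k(\cdot\mid s),\overline q_h^k(s,\cdot)\rangle+\overline\beta_{h,V}(s),H-h+1\}$, $\underline V_h(s)=\max\{\sum_k\alpha_k^K\langle\nu_h^k(\cdot\mid s),\underline q_h^k(s,\cdot)\rangle-\underline\beta_{h,V}(s),0\}$, with $\overline\beta_{h,V}(s)=c_{\mathsf b}\sqrt{\log^3\frac{KS(A+B)}{\delta}/(KH)}\sum_k\alpha_k^K\{\mathsf{Var}_{\mu_h^k(\cdot\mid s)}(\overline q_h^k(s,\cdot))+H\}$ and $\underline\beta_{h,V}$ analogous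 with $(\nu_h^k,\underline q_h^k)$. Auxiliary empirical value: $\overline V_{H+1}^{\star,\widehat\nu}=0$ and, for $h\le H$, $\overline V_h^{\star,\widehat\nu}(s)=\max_{a\in\mathcal A}\sum_{k=1}^K\alpha_k^K\big[\overline r_h^k(s,a)+\langle\overline P_h^k(\cdot\mid s,a),\overline V_{h+1}^{\star,\widehat\nu}\rangle\big]$. *)

theory Defs
  imports "HOL-Analysis.Analysis" "HOL-Probability.Probability"
begin

text \<open>
  States are 0..S-1, max-player actions 0..A-1, min-player actions 0..B-1
  (natural numbers), steps h = 1..H, iterations k = 1..K.
  r h s a b is the reward, P h s a b the transition kernel.
  One "sample" at (h,k) is a pair of functions:
    fst: s a |-> (b, s')   (the draws for the max-player update, b ~ nu_h^k(.|s), s' ~ P_h(.|s,a,b))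
    snd: s b |-> (a, s')   (the draws for the min-player update, a ~ mu_h^k(.|s), s' ~ P_h(.|s,a,b)).
  A full run of the random algorithm is omega :: nat => nat => sample  (indexed by h, k).
  All algorithm quantities are deterministic functions of omega; the law of omega is
  defined adaptively (sequential sampling in the algorithm's order) by alg_pmf.
\<close>

type_synonym samp = "(nat \<Rightarrow> nat \<Rightarrow> nat \<times> nat) \<times> (nat \<Rightarrow> nat \<Rightarrow> nat \<times> nat)"

locale nashq =
  fixes S A B H K :: nat
    and c_alpha c_b \<delta> :: real
    and r :: "nat \<Rightarrow> nat \<Rightarrow> nat \<Rightarrow> nat \<Rightarrow> real"
    and P :: "nat \<Rightarrow> nat \<Rightarrow> nat \<Rightarrow> nat \<Rightarrow> nat pmf"
begin

definition alpha :: "nat \<Rightarrow> real" where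
  "alpha k = c_alpha * ln (real K) / (real k - 1 + c_alpha * ln (real K))"

definition alphaK :: "nat \<Rightarrow> real" where
  "alphaK i = alpha i * (\<Prod>j\<in>{i+1..K}. 1 - alpha j)"

text \<open>eta k is the paper's eta_k = sqrt(log K / (alpha_{k-1} H)), used for k >= 2\<close>
definition eta :: "nat \<Rightarrow> real" where
  "eta k = sqrt (ln (real K) / (alpha (k - 1) * real H))"

definition varp :: "nat \<Rightarrow> (nat \<Rightarrow> real) \<Rightarrow> (nat \<Rightarrow> real) \<Rightarrow> real" where
  "varp n \<pi> f = (\<Sum>a<n. \<pi> a * (f a - (\<Sum>a'<n. \<pi> a' * f a')) ^ 2)"

definition bfac :: real where
  "bfac = c_b * sqrt ((ln (real K * real S * (real A + real B) / \<delta>)) ^ 3 / (real K * real H))"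

text \<open>overline q_h^k(s,a) and underline q_h^k(s,b); wh = omega h, Vb/Vu = value at step h+1\<close>
definition qb :: "nat \<Rightarrow> (nat \<Rightarrow> samp) \<Rightarrow> (nat \<Rightarrow> real) \<Rightarrow> nat \<Rightarrow> nat \<Rightarrow> nat \<Rightarrow> real" where
  "qb h wh Vb k s a = r h s a (fst (fst (wh k) s a)) + Vb (snd (fst (wh k) s a))"

definition qu :: "nat \<Rightarrow> (nat \<Rightarrow> samp) \<Rightarrow> (nat \<Rightarrow> real) \<Rightarrow> nat \<Rightarrow> nat \<Rightarrow> nat \<Rightarrow> real" where
  "qu h wh Vu k s b = r h s (fst (snd (wh k) s b)) b + Vu (snd (snd (wh k) s b))"

primrec Qb :: "nat \<Rightarrow> (nat \<Rightarrow> samp) \<Rightarrow> (nat \<Rightarrow> real) \<Rightarrow> nat \<Rightarrow> nat \<Rightarrow> nat \<Rightarrow> real" where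
  "Qb h wh Vb 0 = (\<lambda>s a. 0)"
| "Qb h wh Vb (Suc k) = (\<lambda>s a. (1 - alpha (Suc k)) * Qb h wh Vb k s a + alpha (Suc k) * qb h wh Vb (Suc k) s a)"

primrec Qu :: "nat \<Rightarrow> (nat \<Rightarrow> samp) \<Rightarrow> (nat \<Rightarrow> real) \<Rightarrow> nat \<Rightarrow> nat \<Rightarrow> nat \<Rightarrow> real" where
  "Qu h wh Vu 0 = (\<lambda>s b. 0)"
| "Qu h wh Vu (Suc k) = (\<lambda>s b. (1 - alpha (Suc k)) * Qu h wh Vu k s b + alpha (Suc k) * qu h wh Vu (Suc k) s b)"

definition mu :: "nat \<Rightarrow> (nat \<Rightarrow> samp) \<Rightarrow> (nat \<Rightarrow> real) \<Rightarrow> nat \<Rightarrow> nat \<Rightarrow> nat \<Rightarrow> real" where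
  "mu h wh Vb k s a = (if k \<le> 1 then 1 / real A
     else exp (eta k * Qb h wh Vb (k - 1) s a) / (\<Sum>a'<A. exp (eta k * Qb h wh Vb (k - 1) s a')))"

definition nu :: "nat \<Rightarrow> (nat \<Rightarrow> samp) \<Rightarrow> (nat \<Rightarrow> real) \<Rightarrow> nat \<Rightarrow> nat \<Rightarrow> nat \<Rightarrow> real" where
  "nu h wh Vu k s b = (if k \<le> 1 then 1 / real B
     else exp (- eta k * Qu h wh Vu (k - 1) s b) / (\<Sum>b'<B. exp (- eta k * Qu h wh Vu (k - 1) s b')))"

definition Vbar_step :: "nat \<Rightarrow> (nat \<Rightarrow> samp) \<Rightarrow> (nat \<Rightarrow> real) \<Rightarrow> nat \<Rightarrow> real" where
  "Vbar_step h wh Vb s = min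
     ((\<Sum>k=1..K. alphaK k * (\<Sum>a<A. mu h wh Vb k s a * qb h wh Vb k s a))
      + bfac * (\<Sum>k=1..K. alphaK k * (varp A (mu h wh Vb k s) (qb h wh Vb k s) + real H)))
     (real H - real h + 1)"

definition Vund_step :: "nat \<Rightarrow> (nat \<Rightarrow> samp) \<Rightarrow> (nat \<Rightarrow> real) \<Rightarrow> nat \<Rightarrow> real" where
  "Vund_step h wh Vu s = max
     ((\<Sum>k=1..K. alphaK k * (\<Sum>b<B. nu h wh Vu k s b * qu h wh Vu k s b))
      - bfac * (\<Sum>k=1..K. alphaK k * (varp B (nu h wh Vu k s) (qu h wh Vu k s) + real H)))
     0"

text \<open>Vnext w j = (overline V_h, underline V_h) with h = H + 1 - j\<close>
primrec Vnext :: "(nat \<Rightarrow> nat \<Rightarrow> samp) \<Rightarrow> nat \<Rightarrow> (nat \<Rightarrow> real) \<times> (nat \<Rightarrow> real)" where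
  "Vnext w 0 = (\<lambda>s. 0, \<lambda>s. 0)"
| "Vnext w (Suc j) = (Vbar_step (H - j) (w (H - j)) (fst (Vnext w j)),
                      Vund_step (H - j) (w (H - j)) (snd (Vnext w j)))"

definition Vbar :: "(nat \<Rightarrow> nat \<Rightarrow> samp) \<Rightarrow> nat \<Rightarrow> nat \<Rightarrow> real" where
  "Vbar w h = fst (Vnext w (H + 1 - h))"

text \<open>auxiliary empirical value overline V_h^{*,hat nu}, h = H + 1 - j\<close>
primrec Vstar_n :: "(nat \<Rightarrow> nat \<Rightarrow> samp) \<Rightarrow> nat \<Rightarrow> nat \<Rightarrow> real" where
  "Vstar_n w 0 = (\<lambda>s. 0)"
| "Vstar_n w (Suc j) = (\<lambda>s. Max ((\<lambda>a. \<Sum>k=1..K. alphaK k *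
       (r (H - j) s a (fst (fst (w (H - j) k) s a)) + Vstar_n w j (snd (fst (w (H - j) k) s a)))) ` {..<A}))"

definition Vstar :: "(nat \<Rightarrow> nat \<Rightarrow> samp) \<Rightarrow> nat \<Rightarrow> nat \<Rightarrow> real" where
  "Vstar w h = Vstar_n w (H + 1 - h)"

definition samp_dist :: "(nat \<Rightarrow> nat \<Rightarrow> samp) \<Rightarrow> nat \<Rightarrow> nat \<Rightarrow> samp pmf" where
  "samp_dist w h k =
     (let Vb = fst (Vnext w (H - h)); Vu = snd (Vnext w (H - h));
          muP = (\<lambda>s. embed_pmf (\<lambda>a. if a < A then mu h (w h) Vb k s a else 0));
          nuP = (\<lambda>s. embed_pmf (\<lambda>b. if b < B then nu h (w h) Vu k s b else 0))
      in pair_pmf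
        (Pi_pmf {..<S} (\<lambda>_. (0, 0)) (\<lambda>s. Pi_pmf {..<A} (0, 0)
            (\<lambda>a. bind_pmf (nuP s) (\<lambda>b. map_pmf (\<lambda>s'. (b, s')) (P h s a b)))))
        (Pi_pmf {..<S} (\<lambda>_. (0, 0)) (\<lambda>s. Pi_pmf {..<B} (0, 0)
            (\<lambda>b. bind_pmf (muP s) (\<lambda>a. map_pmf (\<lambda>s'. (a, s')) (P h s a b))))))"

fun run :: "(nat \<Rightarrow> nat \<Rightarrow> samp) \<Rightarrow> (nat \<times> nat) list \<Rightarrow> (nat \<Rightarrow> nat \<Rightarrow> samp) pmf" where
  "run w [] = return_pmf w"
| "run w ((h, k) # xs) = bind_pmf (samp_dist w h k) (\<lambda>x. run (w(h := (w h)(k := x))) xs)"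

definition order :: "(nat \<times> nat) list" where
  "order = concat (map (\<lambda>h. map (\<lambda>k. (h, k)) [1..<K+1]) (rev [1..<H+1]))"

definition alg_pmf :: "(nat \<Rightarrow> nat \<Rightarrow> samp) pmf" where
  "alg_pmf = run (\<lambda>h k. ((\<lambda>s a. (0, 0)), (\<lambda>s b. (0, 0)))) order"

end

end

theory Submission
  imports Defs
begin

text \<open>Optimism of the upper estimate is deterministic: it holds for every realisation of the
  samples, so the event has probability one, and neither the sampling law nor the support of
  the transition kernel plays a role.

  Going backwards in the step, assume the upper estimate dominates the empirical best-response
  value at step \<open>h + 1\<close>. By monotonicity the best-response value at step \<open>h\<close> is then at most
  the reward of the best fixed action in hindsight, \<open>max a. \<Sum>k. alphaK k * qb k s a\<close>, of the
  max-player's online learning problem. Unrolling the Q-update shows that the policies \<open>mu k\<close>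
  are exponential weights on reweighted cumulative rewards with non-increasing learning rates,
  so the potential argument bounds the regret by a \<open>ln A\<close> term plus one centred
  log-moment-generating term per round. In the early rounds \<open>2 * k \<le> K\<close> that term is at most
  \<open>alphaK k * H\<close>, and these weights are tiny since they carry the factor
  \<open>\<Prod>j > K/2. 1 - alpha j\<close>; in the late rounds the effective step size is small, which gives a
  second-order bound by the variance of \<open>qb k\<close> under \<open>mu k\<close>. Once
  \<open>K \<ge> 32 * c_alpha * H * \<iota>^4\<close> and \<open>c_b \<ge> 2 * c_alpha\<close>, the bonus covers all of it.\<close>

lemma exp_le_1_plus_plus_square:
  fixes u :: real
  assumes "\<bar>u\<bar> \<le> 1"
  shows "exp u \<le> 1 + u + u\<^sup>2"
proof (cases "u \<ge> 0")
  case True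
  then show ?thesis using exp_bound[of u] assms by auto
next
  case False
  define y where "y = - u"
  have y: "0 < y" "y \<le> 1" using False assms by (auto simp: y_def)
  have pos: "0 < 1 + y + y\<^sup>2 / 2" using y by (simp add: add_pos_nonneg)
  have "exp u = 1 / exp y" by (simp add: y_def exp_minus field_simps)
  also have "\<dots> \<le> 1 / (1 + y + y\<^sup>2 / 2)"
    using exp_lower_Taylor_quadratic[of y] y pos by (intro divide_left_mono) auto
  also have "\<dots> \<le> 1 - y + y\<^sup>2"
  proof -
    have "(1 - y + y\<^sup>2) * (1 + y + y\<^sup>2 / 2) = 1 + (y^2 + y^3 + y^4) / 2"
      by (simp add: power2_eq_square power3_eq_cube power4_eq_xxxx field_simps)
    moreover have "0 \<le> y^2 + y^3 + y^4" using y by simp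
    ultimately show ?thesis using pos by (simp add: divide_le_eq)
  qed
  finally show ?thesis by (simp add: y_def)
qed

lemma sum_lessThan_exp_pos: "1 \<le> n \<Longrightarrow> 0 < (\<Sum>a<n::nat. exp (f a :: real))"
  by (intro sum_pos) (auto simp: lessThan_empty_iff)

lemma ln_le_of_le_exp: "0 < (x::real) \<Longrightarrow> x \<le> exp y \<Longrightarrow> ln x \<le> y"
  using ln_le_cancel_iff[of x "exp y"] by simp

lemma prod_one_minus_le_exp_neg_sum:
  fixes x :: "'a \<Rightarrow> real"
  assumes "\<And>j. j \<in> J \<Longrightarrow> x j \<le> 1"
  shows "(\<Prod>j\<in>J. 1 - x j) \<le> exp (- (\<Sum>j\<in>J. x j))"
proof -
  have "(\<Prod>j\<in>J. 1 - x j) \<le> (\<Prod>j\<in>J. exp (- x j))"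
    using assms exp_ge_add_one_self[of "- x _"] by (intro prod_mono) auto
  then show ?thesis by (cases "finite J") (simp_all add: exp_sum sum_negf[symmetric])
qed

lemma varp_scale: "nashq.varp n \<pi> (\<lambda>a. c * f a) = c\<^sup>2 * nashq.varp n \<pi> f"
proof -
  have "(\<Sum>a'<n. \<pi> a' * (c * f a')) = c * (\<Sum>a'<n. \<pi> a' * f a')"
    by (simp add: sum_distrib_left mult_ac)
  then have "(c * f a - (\<Sum>a'<n. \<pi> a' * (c * f a')))\<^sup>2 = c\<^sup>2 * (f a - (\<Sum>a'<n. \<pi> a' * f a'))\<^sup>2"
    for a by (simp add: power_mult_distrib right_diff_distrib[symmetric])
  then show ?thesis unfolding nashq.varp_def by (simp add: sum_distrib_left mult_ac)
qed

section \<open>Exponential weights\<close>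

definition log_mean_exp :: "nat \<Rightarrow> (nat \<Rightarrow> real) \<Rightarrow> real \<Rightarrow> real" where
  "log_mean_exp n x l = ln ((\<Sum>a<n. exp (l * x a)) / n) / l"

lemma log_mean_exp_zero: "1 \<le> n \<Longrightarrow> log_mean_exp n (\<lambda>_. 0) l = 0"
  by (simp add: log_mean_exp_def)

lemma log_mean_exp_ge:
  assumes "0 < l" "a < n"
  shows "x a - ln n / l \<le> log_mean_exp n x l"
proof -
  have "exp (l * x a) \<le> (\<Sum>a<n. exp (l * x a))"
    using assms by (intro member_le_sum) auto
  then have "ln (exp (l * x a) / n) \<le> ln ((\<Sum>a<n. exp (l * x a)) / n)"
    using assms sum_lessThan_exp_pos[of n "\<lambda>a. l * x a"]
    by (subst ln_le_cancel_iff) (auto intro: divide_right_mono)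
  then have "l * x a - ln n \<le> ln ((\<Sum>a<n. exp (l * x a)) / n)"
    using assms by (simp add: ln_div)
  then have "(l * x a - ln n) / l \<le> ln ((\<Sum>a<n. exp (l * x a)) / n) / l"
    using assms by (intro divide_right_mono) auto
  moreover have "(l * x a - ln n) / l = x a - ln n / l" using assms by (simp add: field_simps)
  ultimately show ?thesis unfolding log_mean_exp_def by simp
qed

text \<open>This is the power mean inequality: by concavity of \<open>t \<mapsto> t powr (l'/l)\<close>, the mean of
  \<open>exp (l * x a) powr (l'/l)\<close> is at most the mean of \<open>exp (l * x a)\<close> raised to \<open>l'/l\<close>.\<close>

lemma log_mean_exp_mono_rate:
  assumes n: "1 \<le> n" and l: "0 < l'" "l' \<le> l"
  shows "log_mean_exp n x l' \<le> log_mean_exp n x l"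
proof -
  define M where "M = (\<Sum>a<n. exp (l * x a)) / n"
  define p where "p = l' / l"
  have M: "0 < M" unfolding M_def using n sum_lessThan_exp_pos[OF n] by auto
  have p: "0 < p" "p \<le> 1" using l by (auto simp: p_def)
  have each: "exp (l' * x a) \<le> exp (p * ln M) * (1 - p + p * exp (l * x a) / M)" for a
  proof -
    have "exp (l' * x a) = exp (p * ln M) * exp (p * (l * x a - ln M))"
      using l by (simp add: p_def mult_exp_exp algebra_simps)
    also have "\<dots> \<le> exp (p * ln M) * (1 + p * (exp (l * x a - ln M) - 1))"
      using convex_onD[OF exp_convex, of p 0 "l * x a - ln M"] p
      by (intro mult_left_mono) (auto simp: algebra_simps)
    finally show ?thesis using M by (simp add: exp_diff algebra_simps)
  qed
  have "(\<Sum>a<n. exp (l' * x a)) \<le> (\<Sum>a<n. exp (p * ln M) * ((1 - p) + (p / M) * exp (l * x a)))"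
    using each by (intro sum_mono) (simp add: algebra_simps)
  also have "\<dots> = exp (p * ln M) * (n * (1 - p) + p / M * (\<Sum>a<n. exp (l * x a)))"
    by (simp add: sum_distrib_left[symmetric] sum.distrib sum_distrib_left)
  also have "\<dots> = exp (p * ln M) * n"
  proof -
    have "(\<Sum>a<n. exp (l * x a)) = M * n" using n by (simp add: M_def)
    then show ?thesis using M by (simp add: field_simps)
  qed
  finally have "(\<Sum>a<n. exp (l' * x a)) / n \<le> exp (p * ln M)"
    using n by (simp add: divide_le_eq mult.commute)
  then have "ln ((\<Sum>a<n. exp (l' * x a)) / n) \<le> p * ln M"
    using n sum_lessThan_exp_pos[OF n, of "\<lambda>a. l' * x a"] by (intro ln_le_of_le_exp) auto
  then have "ln ((\<Sum>a<n. exp (l' * x a)) / n) / l' \<le> p * ln M / l'"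
    using l by (intro divide_right_mono) auto
  also have "p * ln M / l' = ln M / l" using l by (simp add: p_def)
  finally have "ln ((\<Sum>a<n. exp (l' * x a)) / n) / l' \<le> ln M / l" .
  then show ?thesis by (simp add: log_mean_exp_def M_def)
qed

lemma log_mean_exp_add:
  assumes n: "1 \<le> n" and l: "0 < l"
    and mu: "\<And>a. mu a = exp (l * x a) / (\<Sum>a'<n. exp (l * x a'))"
  shows "log_mean_exp n (\<lambda>a. x a + y a) l = log_mean_exp n x l + (\<Sum>a<n. mu a * y a)
     + ln (\<Sum>a<n. mu a * exp (l * (y a - (\<Sum>a<n. mu a * y a)))) / l"
proof -
  define Z where "Z = (\<Sum>a'<n. exp (l * x a'))"
  define m where "m = (\<Sum>a<n. mu a * y a)"
  have Z: "0 < Z" unfolding Z_def using sum_lessThan_exp_pos[OF n] .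
  have "(\<Sum>a<n. exp (l * (x a + y a))) = (\<Sum>a<n. Z * (mu a * exp (l * y a)))"
    using Z by (intro sum.cong) (auto simp: mu Z_def[symmetric] distrib_left exp_add)
  also have "\<dots> = Z * exp (l * m) * (\<Sum>a<n. mu a * exp (l * (y a - m)))"
    by (simp add: sum_distrib_left right_diff_distrib exp_diff mult.assoc)
  finally have eq: "(\<Sum>a<n. exp (l * (x a + y a))) = Z * exp (l * m) * (\<Sum>a<n. mu a * exp (l * (y a - m)))" .
  have "0 < (\<Sum>a<n. mu a * exp (l * (y a - m)))"
    using n Z by (intro sum_pos) (auto simp: lessThan_empty_iff mu Z_def[symmetric])
  then have "ln ((\<Sum>a<n. exp (l * (x a + y a))) / n) = ln (Z / n) + l * m + ln (\<Sum>a<n. mu a * exp (l * (y a - m)))"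
    unfolding eq using Z n by (simp add: ln_mult ln_div)
  then show ?thesis
    using l unfolding log_mean_exp_def Z_def[symmetric] m_def[symmetric] by (simp add: field_simps)
qed

lemma sum_centered_linear:
  fixes mu y :: "nat \<Rightarrow> real"
  assumes "(\<Sum>a<n. mu a) = 1"
  shows "(\<Sum>a<n. mu a * (1 + l * (y a - (\<Sum>a<n. mu a * y a)))) = 1"
proof -
  define m where "m = (\<Sum>a<n. mu a * y a)"
  have "(\<Sum>a<n. mu a * (1 + l * (y a - m)))
      = (\<Sum>a<n. mu a) + l * (\<Sum>a<n. mu a * y a) - l * m * (\<Sum>a<n. mu a)"
    by (simp add: algebra_simps sum.distrib sum_subtractf sum_distrib_left)
  then show ?thesis using assms by (simp add: m_def)
qed

lemma one_le_sum_exp_centered: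
  fixes mu y :: "nat \<Rightarrow> real"
  assumes mu0: "\<And>a. a < n \<Longrightarrow> 0 \<le> mu a" and mu1: "(\<Sum>a<n. mu a) = 1"
  shows "1 \<le> (\<Sum>a<n. mu a * exp (l * (y a - (\<Sum>a<n. mu a * y a))))"
proof -
  have "(\<Sum>a<n. mu a * (1 + l * (y a - (\<Sum>a<n. mu a * y a))))
      \<le> (\<Sum>a<n. mu a * exp (l * (y a - (\<Sum>a<n. mu a * y a))))"
    using mu0 by (intro sum_mono mult_left_mono) auto
  then show ?thesis using sum_centered_linear[OF mu1] by simp
qed

lemma sum_weighted_in_range:
  fixes mu y :: "nat \<Rightarrow> real"
  assumes mu0: "\<And>a. a < n \<Longrightarrow> 0 \<le> mu a" and mu1: "(\<Sum>a<n. mu a) = 1"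
    and y: "\<And>a. a < n \<Longrightarrow> 0 \<le> y a \<and> y a \<le> Y"
  shows "0 \<le> (\<Sum>a<n. mu a * y a)" "(\<Sum>a<n. mu a * y a) \<le> Y"
proof -
  show "0 \<le> (\<Sum>a<n. mu a * y a)" using mu0 y by (intro sum_nonneg) auto
  have "(\<Sum>a<n. mu a * y a) \<le> (\<Sum>a<n. mu a * Y)" using mu0 y by (intro sum_mono mult_left_mono) auto
  then show "(\<Sum>a<n. mu a * y a) \<le> Y" using mu1 by (simp add: sum_distrib_right[symmetric])
qed

lemma log_sum_exp_centered_le_range:
  fixes mu y :: "nat \<Rightarrow> real"
  assumes mu0: "\<And>a. a < n \<Longrightarrow> 0 \<le> mu a" and mu1: "(\<Sum>a<n. mu a) = 1"
    and y: "\<And>a. a < n \<Longrightarrow> 0 \<le> y a \<and> y a \<le> Y" and l: "0 < l"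
  shows "ln (\<Sum>a<n. mu a * exp (l * (y a - (\<Sum>a<n. mu a * y a)))) / l \<le> Y"
proof -
  define m where "m = (\<Sum>a<n. mu a * y a)"
  have m: "0 \<le> m" using sum_weighted_in_range[OF mu0 mu1 y] by (simp add: m_def)
  have "(\<Sum>a<n. mu a * exp (l * (y a - m))) \<le> (\<Sum>a<n. mu a * exp (l * Y))"
  proof (intro sum_mono mult_left_mono)
    fix a assume "a \<in> {..<n}"
    then show "exp (l * (y a - m)) \<le> exp (l * Y)" "0 \<le> mu a"
      using y[of a] mu0[of a] m l by auto
  qed
  also have "\<dots> = exp (l * Y)" using mu1 by (simp add: sum_distrib_right[symmetric])
  finally have "ln (\<Sum>a<n. mu a * exp (l * (y a - m))) \<le> l * Y"
    using one_le_sum_exp_centered[OF mu0 mu1, of l y] by (intro ln_le_of_le_exp) (auto simp: m_def)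
  then show ?thesis using l by (simp add: m_def divide_le_eq mult.commute)
qed

lemma log_sum_exp_centered_le_variance:
  fixes mu y :: "nat \<Rightarrow> real"
  assumes mu0: "\<And>a. a < n \<Longrightarrow> 0 \<le> mu a" and mu1: "(\<Sum>a<n. mu a) = 1"
    and y: "\<And>a. a < n \<Longrightarrow> 0 \<le> y a \<and> y a \<le> Y" and l: "0 < l" and small: "l * Y \<le> 1"
  shows "ln (\<Sum>a<n. mu a * exp (l * (y a - (\<Sum>a<n. mu a * y a)))) / l \<le> l * nashq.varp n mu y"
proof -
  define m where "m = (\<Sum>a<n. mu a * y a)"
  define v where "v = l\<^sup>2 * nashq.varp n mu y"
  have m: "0 \<le> m" "m \<le> Y" using sum_weighted_in_range[OF mu0 mu1 y] by (simp_all add: m_def)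
  have "(\<Sum>a<n. mu a * exp (l * (y a - m))) \<le> (\<Sum>a<n. mu a * (1 + l * (y a - m) + (l * (y a - m))\<^sup>2))"
  proof (intro sum_mono mult_left_mono)
    fix a assume "a \<in> {..<n}"
    then show "0 \<le> mu a" using mu0 by simp
    have "\<bar>y a - m\<bar> \<le> Y" using \<open>a \<in> {..<n}\<close> y[of a] m by auto
    then have "l * \<bar>y a - m\<bar> \<le> l * Y" using l by (intro mult_left_mono) auto
    then have "\<bar>l * (y a - m)\<bar> \<le> 1" using l small by (simp only: abs_mult abs_of_pos)
    then show "exp (l * (y a - m)) \<le> 1 + l * (y a - m) + (l * (y a - m))\<^sup>2"
      by (rule exp_le_1_plus_plus_square)
  qed
  also have "\<dots> = (\<Sum>a<n. mu a * (1 + l * (y a - m))) + l\<^sup>2 * (\<Sum>a<n. mu a * (y a - m)\<^sup>2)"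
    by (simp add: distrib_left sum.distrib sum_distrib_left power_mult_distrib mult_ac)
  also have "\<dots> = 1 + v"
    using sum_centered_linear[OF mu1] by (simp add: nashq.varp_def m_def v_def)
  also have "\<dots> \<le> exp v" using exp_ge_add_one_self[of v] by simp
  finally have "ln (\<Sum>a<n. mu a * exp (l * (y a - m))) \<le> v"
    using one_le_sum_exp_centered[OF mu0 mu1, of l y] by (intro ln_le_of_le_exp) (auto simp: m_def)
  then show ?thesis using l by (simp add: m_def v_def divide_le_eq power2_eq_square mult_ac)
qed

lemma exp_weights_regret:
  fixes y mu :: "nat \<Rightarrow> nat \<Rightarrow> real" and lam :: "nat \<Rightarrow> real"
  defines "G \<equiv> \<lambda>k a. \<Sum>i=1..k. y i a"
  assumes n: "1 \<le> n" and a: "a < m"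
    and lam_pos: "\<And>i. 1 \<le> i \<Longrightarrow> i \<le> n \<Longrightarrow> 0 < lam i"
    and lam_antimono: "\<And>i. 2 \<le> i \<Longrightarrow> i \<le> n \<Longrightarrow> lam i \<le> lam (i - 1)"
    and mu: "\<And>k a. 1 \<le> k \<Longrightarrow> k \<le> n \<Longrightarrow>
      mu k a = exp (lam k * G (k - 1) a) / (\<Sum>a'<m. exp (lam k * G (k - 1) a'))"
  shows "G n a \<le> ln m / lam n + (\<Sum>i=1..n. (\<Sum>a<m. mu i a * y i a)
          + ln (\<Sum>a<m. mu i a * exp (lam i * (y i a - (\<Sum>a<m. mu i a * y i a)))) / lam i)"
proof -
  define R where "R i = (\<Sum>a<m. mu i a * y i a)
    + ln (\<Sum>a<m. mu i a * exp (lam i * (y i a - (\<Sum>a<m. mu i a * y i a)))) / lam i" for i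
  have m: "1 \<le> m" using a by simp
  have step: "log_mean_exp m (G k) (lam k) = log_mean_exp m (G (k - 1)) (lam k) + R k"
    if k: "1 \<le> k" "k \<le> n" for k
  proof -
    have "G k = (\<lambda>a. G (k - 1) a + y k a)"
      using k unfolding G_def by (cases k) (auto simp: fun_eq_iff)
    then show ?thesis unfolding R_def using log_mean_exp_add[OF m lam_pos[OF k] mu[OF k]] by simp
  qed
  have potential: "log_mean_exp m (G k) (lam k) \<le> (\<Sum>i=1..k. R i)" if "1 \<le> k" "k \<le> n" for k
    using that
  proof (induction k rule: nat_induct_at_least)
    case base
    have "G 0 = (\<lambda>a. 0)" by (simp add: G_def)
    then show ?case using step[of 1] base m by (simp add: log_mean_exp_zero)
  next
    case (Suc k)
    have "log_mean_exp m (G k) (lam (Suc k)) \<le> log_mean_exp m (G k) (lam k)"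
      using Suc lam_pos lam_antimono[of "Suc k"] by (intro log_mean_exp_mono_rate m) auto
    then show ?case using step[of "Suc k"] Suc by simp
  qed
  have "G n a - ln m / lam n \<le> log_mean_exp m (G n) (lam n)"
    using log_mean_exp_ge[OF lam_pos a] n by simp
  then show ?thesis using potential[OF n] unfolding R_def by simp
qed

section \<open>The learning-rate schedule\<close>

locale nashq_schedule = nashq +
  assumes K_ge_2: "2 \<le> K" and c_alpha_ge_24: "24 \<le> c_alpha"
    and H_pos: "1 \<le> H" and A_pos: "1 \<le> A"
begin

definition c_lnK :: real where "c_lnK = c_alpha * ln (real K)"

text \<open>Unrolling the recursion of \<open>Qb\<close> gives \<open>Qb k = decay k * (\<Sum>i\<le>k. weight i * qb i)\<close>, so the
  policy \<open>mu k\<close> is an exponential-weights policy on the cumulative weighted rewards with the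
  learning rate \<open>rate k = eta k * decay (k - 1)\<close>. The policy \<open>mu 1\<close> is uniform, so \<open>rate 1\<close> is
  arbitrary; choosing it equal to \<open>rate 2\<close> keeps the rates non-increasing.\<close>

definition decay :: "nat \<Rightarrow> real" where "decay k = (\<Prod>j\<in>{2..k}. 1 - alpha j)"
definition weight :: "nat \<Rightarrow> real" where "weight i = alpha i / decay i"
definition rate :: "nat \<Rightarrow> real" where "rate k = eta (max k 2) * decay (max k 2 - 1)"

lemma ln_K_ge: "2 / 3 \<le> ln (real K)"
proof -
  have "ln 2 \<le> ln (real K)" using K_ge_2 by (subst ln_le_cancel_iff) auto
  then show ?thesis using ln2_ge_two_thirds by linarith
qed

lemma c_lnK_ge: "16 \<le> c_lnK"
  using mult_mono[OF c_alpha_ge_24 ln_K_ge] c_alpha_ge_24 by (simp add: c_lnK_def)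

lemma alpha_eq: "alpha k = c_lnK / (real k - 1 + c_lnK)"
  by (simp add: alpha_def c_lnK_def)

lemma alpha_1: "alpha 1 = 1" "alpha (Suc 0) = 1"
  using c_lnK_ge by (simp_all add: alpha_eq)

lemma alpha_pos: "1 \<le> k \<Longrightarrow> 0 < alpha k"
  using c_lnK_ge by (simp add: alpha_eq)

lemma alpha_le_1: "1 \<le> k \<Longrightarrow> alpha k \<le> 1"
  using c_lnK_ge by (simp add: alpha_eq divide_le_eq)

lemma alpha_lt_1: "2 \<le> k \<Longrightarrow> alpha k < 1"
  using c_lnK_ge by (simp add: alpha_eq divide_less_eq)

lemma decay_pos: "0 < decay k"
  unfolding decay_def using alpha_lt_1 by (intro prod_pos) auto

lemma decay_1: "decay 1 = 1" "decay (Suc 0) = 1"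
  by (simp_all add: decay_def)

lemma weight_pos: "1 \<le> i \<Longrightarrow> 0 < weight i"
  using alpha_pos decay_pos by (simp add: weight_def)

lemma decay_Suc: "1 \<le> k \<Longrightarrow> decay (Suc k) = (1 - alpha (Suc k)) * decay k"
  unfolding decay_def by (simp add: prod.cl_ivl_Suc)

lemma decay_weight: "decay i * weight i = alpha i"
  using decay_pos[of i] by (simp add: weight_def)

lemma Qb_eq: "Qb h wh Vb k s a = decay k * (\<Sum>i=1..k. weight i * qb h wh Vb i s a)"
proof (induction k)
  case 0
  then show ?case by simp
next
  case (Suc k)
  show ?case
  proof (cases "k = 0")
    case True
    then show ?thesis by (simp add: decay_1 weight_def)
  next
    case False
    have "Qb h wh Vb (Suc k) s a = (1 - alpha (Suc k)) * decay k * (\<Sum>i=1..k. weight i * qb h wh Vb i s a)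
        + alpha (Suc k) * qb h wh Vb (Suc k) s a"
      using Suc by simp
    also have "\<dots> = decay (Suc k) * (\<Sum>i=1..k. weight i * qb h wh Vb i s a)
        + decay (Suc k) * weight (Suc k) * qb h wh Vb (Suc k) s a"
      using decay_Suc[of k] False decay_weight[of "Suc k"] by simp
    finally show ?thesis by (simp add: distrib_left)
  qed
qed

lemma alphaK_eq: "1 \<le> i \<Longrightarrow> i \<le> K \<Longrightarrow> alphaK i = decay K * weight i"
proof -
  assume i: "1 \<le> i" "i \<le> K"
  have "decay K = decay i * (\<Prod>j\<in>{i+1..K}. 1 - alpha j)"
    using prod.ub_add_nat[of 2 i "\<lambda>j. 1 - alpha j" "K - i"] i by (simp add: decay_def)
  then show "alphaK i = decay K * weight i"
    using decay_pos[of i] unfolding alphaK_def weight_def by (simp add: field_simps)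
qed

lemma decay_sum_weight: "1 \<le> n \<Longrightarrow> decay n * (\<Sum>i=1..n. weight i) = 1"
proof (induction n rule: nat_induct_at_least)
  case base
  then show ?case by (simp add: decay_1 weight_def alpha_1)
next
  case (Suc n)
  have "decay (Suc n) * (\<Sum>i=1..Suc n. weight i)
      = (1 - alpha (Suc n)) * (decay n * (\<Sum>i=1..n. weight i)) + alpha (Suc n)"
    using decay_Suc[OF Suc.hyps] decay_weight[of "Suc n"] by (simp add: distrib_left)
  then show ?case using Suc.IH by simp
qed

lemma alphaK_sum: "(\<Sum>i=1..K. alphaK i) = 1"
  using decay_sum_weight[of K] K_ge_2 by (simp add: alphaK_eq sum_distrib_left)

lemma alphaK_nonneg: "1 \<le> i \<Longrightarrow> i \<le> K \<Longrightarrow> 0 \<le> alphaK i"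
  using alphaK_eq decay_pos[of K] weight_pos[of i] by simp

lemma eta_sq: "2 \<le> k \<Longrightarrow> (eta k)\<^sup>2 = ln (real K) / (alpha (k - 1) * real H)"
  using alpha_pos[of "k - 1"] ln_K_ge H_pos by (simp add: eta_def less_imp_le)

lemma eta_pos: "2 \<le> k \<Longrightarrow> 0 < eta k"
  using alpha_pos[of "k - 1"] ln_K_ge H_pos by (simp add: eta_def)

lemma one_minus_alpha_sq_div_le: "2 \<le> j \<Longrightarrow> (1 - alpha j)\<^sup>2 / alpha j \<le> 1 / alpha (j - 1)"
proof -
  assume j: "2 \<le> j"
  define x where "x = real j - 1"
  define c where "c = c_lnK"
  have x: "1 \<le> x" and c: "1 \<le> c" using j c_lnK_ge by (auto simp: x_def c_def)
  have e1: "1 - alpha j = x / (x + c)" and e2: "alpha j = c / (x + c)"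
    using x c by (simp_all add: alpha_eq x_def[symmetric] c_def[symmetric] field_simps)
  have "(1 - alpha j)\<^sup>2 / alpha j = x\<^sup>2 / (c * (x + c))"
    by (subst e1, subst e2) (use x c in \<open>simp add: power_divide power2_eq_square\<close>)
  also have "\<dots> \<le> (x + c) * (x - 1 + c) / (c * (x + c))"
  proof (intro divide_right_mono)
    have "(x + c) * (x - 1 + c) - x\<^sup>2 = x * (2 * c - 1) + c * (c - 1)"
      by (simp add: algebra_simps power2_eq_square)
    moreover have "0 \<le> x * (2 * c - 1)" using x c by (intro mult_nonneg_nonneg) auto
    moreover have "0 \<le> c * (c - 1)" using c by (intro mult_nonneg_nonneg) auto
    ultimately show "x\<^sup>2 \<le> (x + c) * (x - 1 + c)" by linarith
  qed (use x c in simp)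
  also have "\<dots> = (x - 1 + c) / c" using x c by simp
  also have "\<dots> = 1 / alpha (j - 1)"
    using j by (simp add: alpha_eq x_def c_def of_nat_diff)
  finally show ?thesis .
qed

lemma eta_Suc_le: "2 \<le> j \<Longrightarrow> eta (Suc j) * (1 - alpha j) \<le> eta j"
proof -
  assume j: "2 \<le> j"
  have "(eta (Suc j) * (1 - alpha j))\<^sup>2 = ln (real K) / real H * ((1 - alpha j)\<^sup>2 / alpha j)"
    using eta_sq[of "Suc j"] j by (simp add: power_mult_distrib mult.commute)
  also have "\<dots> \<le> ln (real K) / real H * (1 / alpha (j - 1))"
    using one_minus_alpha_sq_div_le[OF j] ln_K_ge by (intro mult_left_mono) auto
  also have "\<dots> = (eta j)\<^sup>2" using eta_sq[OF j] by (simp add: mult.commute)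
  finally show ?thesis by (rule power2_le_imp_le) (use eta_pos[OF j] in simp)
qed

lemma rate_pos: "0 < rate k"
  unfolding rate_def using eta_pos[of "max k 2"] decay_pos by simp

lemma rate_eq: "2 \<le> k \<Longrightarrow> rate k = eta k * decay (k - 1)"
  by (simp add: rate_def max_def)

lemma rate_antimono: "2 \<le> k \<Longrightarrow> rate k \<le> rate (k - 1)"
proof (cases "k = 2")
  case True
  then show ?thesis by (simp add: rate_def numeral_2_eq_2)
next
  case False
  assume "2 \<le> k"
  with False obtain j where j: "k = Suc j" "2 \<le> j" by (cases k) auto
  have "rate k = eta (Suc j) * (1 - alpha j) * decay (j - 1)"
    using j decay_Suc[of "j - 1"] by (simp add: rate_def)
  also have "\<dots> \<le> eta j * decay (j - 1)"
    using eta_Suc_le[OF j(2)] decay_pos by (intro mult_right_mono) (auto intro: less_imp_le)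
  also have "\<dots> = rate (k - 1)" using j by (simp add: rate_def)
  finally show ?thesis .
qed

lemma mu_eq: "1 \<le> k \<Longrightarrow> mu h wh Vb k s a =
    exp (rate k * (\<Sum>i=1..k-1. weight i * qb h wh Vb i s a)) /
      (\<Sum>a'<A. exp (rate k * (\<Sum>i=1..k-1. weight i * qb h wh Vb i s a')))"
  by (cases "k = 1") (simp_all add: mu_def rate_eq Qb_eq mult.assoc)

lemma mu_nonneg: "1 \<le> k \<Longrightarrow> 0 \<le> mu h wh Vb k s a"
  using sum_lessThan_exp_pos[OF A_pos] by (simp add: mu_eq less_imp_le)

lemma mu_sum: "1 \<le> k \<Longrightarrow> (\<Sum>a<A. mu h wh Vb k s a) = 1"
  by (simp add: mu_eq sum_divide_distrib[symmetric]
      sum_lessThan_exp_pos[OF A_pos, THEN less_imp_neq, THEN not_sym])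

definition mgf_term :: "nat \<Rightarrow> (nat \<Rightarrow> samp) \<Rightarrow> (nat \<Rightarrow> real) \<Rightarrow> nat \<Rightarrow> nat \<Rightarrow> real" where
  "mgf_term h wh Vb i s = ln (\<Sum>a<A. mu h wh Vb i s a * exp (rate i * (weight i * qb h wh Vb i s a
        - (\<Sum>a<A. mu h wh Vb i s a * (weight i * qb h wh Vb i s a))))) / rate i"

lemma sum_alphaK: "(\<Sum>k=1..K. alphaK k * f k) = decay K * (\<Sum>k=1..K. weight k * f k)"
  unfolding sum_distrib_left by (intro sum.cong) (auto simp: alphaK_eq)

lemma weighted_regret_le:
  assumes "a < A"
  shows "(\<Sum>k=1..K. alphaK k * qb h wh Vb k s a)
    \<le> (\<Sum>k=1..K. alphaK k * (\<Sum>a<A. mu h wh Vb k s a * qb h wh Vb k s a))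
      + decay K * ln (real A) / rate K + (\<Sum>k=1..K. decay K * mgf_term h wh Vb k s)"
proof -
  have "(\<Sum>i=1..K. weight i * qb h wh Vb i s a) \<le> ln (real A) / rate K
      + (\<Sum>i=1..K. (\<Sum>a<A. mu h wh Vb i s a * (weight i * qb h wh Vb i s a)) + mgf_term h wh Vb i s)"
    unfolding mgf_term_def
    by (rule exp_weights_regret[where mu = "\<lambda>k a. mu h wh Vb k s a"])
      (use assms K_ge_2 rate_pos rate_antimono mu_eq in auto)
  then have "decay K * (\<Sum>i=1..K. weight i * qb h wh Vb i s a) \<le> decay K * (ln (real A) / rate K
      + (\<Sum>i=1..K. weight i * (\<Sum>a<A. mu h wh Vb i s a * qb h wh Vb i s a) + mgf_term h wh Vb i s))"
    using decay_pos[of K] by (intro mult_left_mono) (auto simp: sum_distrib_left mult.left_commute)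
  then show ?thesis
    unfolding sum_alphaK by (simp add: distrib_left sum.distrib sum_distrib_left)
qed

lemma decay_mgf_term_le_range:
  assumes k: "1 \<le> k" "k \<le> K"
    and q: "\<And>a. a < A \<Longrightarrow> 0 \<le> qb h wh Vb k s a \<and> qb h wh Vb k s a \<le> real H"
  shows "decay K * mgf_term h wh Vb k s \<le> alphaK k * real H"
proof -
  have "mgf_term h wh Vb k s \<le> weight k * real H"
    unfolding mgf_term_def
    using weight_pos[OF k(1)] q
    by (intro log_sum_exp_centered_le_range mu_nonneg mu_sum rate_pos k) auto
  then show ?thesis using decay_pos[of K] alphaK_eq[OF k]
    by (metis mult.assoc mult_le_cancel_left_pos)
qed

lemma decay_mgf_term_le_variance:
  assumes k: "1 \<le> k" "k \<le> K"
    and q: "\<And>a. a < A \<Longrightarrow> 0 \<le> qb h wh Vb k s a \<and> qb h wh Vb k s a \<le> real H"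
    and small: "rate k * weight k * real H \<le> 1"
  shows "decay K * mgf_term h wh Vb k s
    \<le> alphaK k * (rate k * weight k) * varp A (mu h wh Vb k s) (qb h wh Vb k s)"
proof -
  have "mgf_term h wh Vb k s \<le> rate k * varp A (mu h wh Vb k s) (\<lambda>a. weight k * qb h wh Vb k s a)"
    unfolding mgf_term_def
    using weight_pos[OF k(1)] q small
    by (intro log_sum_exp_centered_le_variance[where Y = "weight k * real H"] mu_nonneg mu_sum rate_pos k)
      (auto simp: mult.assoc)
  also have "\<dots> = weight k * (rate k * weight k * varp A (mu h wh Vb k s) (qb h wh Vb k s))"
    by (simp add: varp_scale power2_eq_square)
  finally show ?thesis
    using decay_pos[of K] alphaK_eq[OF k] by (simp add: mult.assoc mult_left_mono)
qed

end

section \<open>Consequences of a large number of iterations\<close>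

lemma le_log_argument:
  fixes K S A B :: nat and \<delta> :: real
  assumes "1 \<le> K" "1 \<le> S" "1 \<le> A" "1 \<le> B" "0 < \<delta>" "\<delta> \<le> 1"
  shows "2 * real K \<le> real K * real S * (real A + real B) / \<delta>"
    and "real A \<le> real K * real S * (real A + real B) / \<delta>"
proof -
  have X: "real K * real S * (real A + real B) \<le> real K * real S * (real A + real B) / \<delta>"
    using assms by (simp add: le_divide_eq mult_left_le)
  have "1 * 2 \<le> real S * (real A + real B)" using assms by (intro mult_mono) auto
  then have "real K * 2 \<le> real K * (real S * (real A + real B))" by (intro mult_left_mono) auto
  then show "2 * real K \<le> real K * real S * (real A + real B) / \<delta>" using X by (simp add: mult_ac)
  have "real A \<le> 1 * 1 * (real A + real B)" by simp
  also have "\<dots> \<le> real K * real S * (real A + real B)" using assms by (intro mult_right_mono mult_mono) auto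
  finally show "real A \<le> real K * real S * (real A + real B) / \<delta>" using X by linarith
qed

lemma two_le_K_if_large:
  fixes K S A B H :: nat and c \<delta> :: real
  assumes "1 \<le> K" "1 \<le> S" "1 \<le> A" "1 \<le> B" "0 < \<delta>" "\<delta> \<le> 1" "1 \<le> H" "24 \<le> c"
    and large: "32 * c * real H * (ln (real K * real S * (real A + real B) / \<delta>)) ^ 4 \<le> real K"
  shows "2 \<le> K"
proof (rule ccontr)
  assume "\<not> 2 \<le> K"
  then have K: "K = 1" using assms by simp
  define L where "L = ln (real K * real S * (real A + real B) / \<delta>)"
  have "ln 2 \<le> L"
    using le_log_argument(1)[OF assms(1-6)] K unfolding L_def by (subst ln_le_cancel_iff) auto
  then have "(2 / 3) ^ 4 \<le> L ^ 4" using ln2_ge_two_thirds by (intro power_mono) auto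
  moreover have "24 * 1 \<le> c * real H" using assms by (intro mult_mono) auto
  ultimately have "24 * (2 / 3) ^ 4 \<le> c * real H * L ^ 4" by (intro mult_mono) auto
  moreover have "32 * (c * real H * L ^ 4) \<le> 1" using large K by (simp add: L_def mult.assoc)
  ultimately show False by (simp add: power_divide; linarith)
qed

locale nashq_large = nashq_schedule +
  assumes S_pos: "1 \<le> S" and B_pos: "1 \<le> B" and delta_pos: "0 < \<delta>" and delta_le_1: "\<delta> \<le> 1"
    and reward_range: "\<And>h s a b. 0 \<le> r h s a b \<and> r h s a b \<le> 1"
    and K_large: "32 * c_alpha * real H * (ln (real K * real S * (real A + real B) / \<delta>)) ^ 4 \<le> real K"
    and c_b_ge: "2 * c_alpha \<le> c_b"
begin

definition iota :: real where "iota = ln (real K * real S * (real A + real B) / \<delta>)"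

lemma K_large_iota: "32 * c_alpha * real H * iota ^ 4 \<le> real K"
  using K_large by (simp add: iota_def)

lemma ln_2K_le_iota: "ln (2 * real K) \<le> iota"
  using le_log_argument(1)[of K S A B \<delta>] K_ge_2 S_pos A_pos B_pos delta_pos delta_le_1
  unfolding iota_def by (subst ln_le_cancel_iff) auto

lemma iota_ge_1: "1 \<le> iota"
proof -
  have "ln (2 * real K) = ln 2 + ln (real K)" using K_ge_2 by (simp add: ln_mult)
  then show ?thesis using ln_2K_le_iota ln2_ge_two_thirds ln_K_ge by linarith
qed

lemma ln_K_le_iota: "ln (real K) \<le> iota"
proof -
  have "ln (real K) \<le> ln (2 * real K)" using K_ge_2 by (subst ln_le_cancel_iff) auto
  then show ?thesis using ln_2K_le_iota by linarith
qed

lemma ln_A_le_iota: "ln (real A) \<le> iota"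
  using le_log_argument(2)[of K S A B \<delta>] K_ge_2 S_pos A_pos B_pos delta_pos delta_le_1
  unfolding iota_def by (subst ln_le_cancel_iff) auto

lemma c_lnK_le_K: "c_lnK \<le> real K"
proof -
  have "c_alpha * ln (real K) \<le> c_alpha * iota ^ 4"
    using ln_K_le_iota iota_ge_1 c_alpha_ge_24 self_le_power[of iota 4]
    by (intro mult_left_mono) auto
  also have "\<dots> \<le> 32 * c_alpha * real H * iota ^ 4"
    using H_pos c_alpha_ge_24 iota_ge_1 by (simp add: mult_right_mono)
  finally show ?thesis using K_large_iota by (simp add: c_lnK_def)
qed

lemma H_le_K: "real H \<le> real K"
proof -
  have "1 * 1 \<le> (32 * c_alpha) * iota ^ 4"
    using c_alpha_ge_24 iota_ge_1 by (intro mult_mono one_le_power) auto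
  then have "real H * 1 \<le> real H * (32 * c_alpha * iota ^ 4)" by (intro mult_left_mono) auto
  then show ?thesis using K_large_iota by (simp add: mult_ac)
qed

lemma bonus_sq: "bfac\<^sup>2 = c_b\<^sup>2 * (iota ^ 3 / (real K * real H))"
  using iota_ge_1 by (simp add: bfac_def iota_def[symmetric] power_mult_distrib)

lemma bonus_nonneg: "0 \<le> bfac"
  using iota_ge_1 c_b_ge c_alpha_ge_24 by (simp add: bfac_def iota_def[symmetric])

lemma le_bonus_if_sq_le: "x\<^sup>2 \<le> c_b\<^sup>2 * (iota ^ 3 / (real K * real H)) \<Longrightarrow> x \<le> bfac"
  using bonus_sq bonus_nonneg by (metis power2_le_imp_le)

lemma sq_le_iota_pow: "0 \<le> y \<Longrightarrow> y \<le> iota \<Longrightarrow> 2 \<le> n \<Longrightarrow> y\<^sup>2 \<le> iota ^ n"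
  using iota_ge_1 power_mono[of y iota 2] power_increasing[of 2 n iota] by linarith

lemma c_b_sq_ge: "32 * c_alpha \<le> c_b\<^sup>2"
proof -
  have "32 * c_alpha \<le> (2 * c_alpha)\<^sup>2" using c_alpha_ge_24 by (simp add: power2_eq_square)
  also have "\<dots> \<le> c_b\<^sup>2" using c_b_ge c_alpha_ge_24 by (intro power_mono) auto
  finally show ?thesis .
qed

lemma late_alpha_sum_ge: "c_lnK / 4 \<le> (\<Sum>j\<in>{K div 2 + 1..K}. alpha j)"
proof -
  have each: "c_lnK / (2 * real K) \<le> alpha j" if "j \<in> {K div 2 + 1..K}" for j
  proof -
    have "real j - 1 + c_lnK \<le> 2 * real K" using that c_lnK_le_K by auto
    moreover have "0 < real j - 1 + c_lnK" using that c_lnK_ge by auto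
    ultimately show ?thesis unfolding alpha_eq using c_lnK_ge by (intro divide_left_mono) auto
  qed
  have "c_lnK / 4 = real K / 2 * (c_lnK / (2 * real K))" using K_ge_2 by simp
  also have "\<dots> \<le> real (K - K div 2) * (c_lnK / (2 * real K))"
    using c_lnK_ge by (intro mult_right_mono) (linarith, simp)
  also have "\<dots> = (\<Sum>j\<in>{K div 2 + 1..K}. c_lnK / (2 * real K))" by simp
  also have "\<dots> \<le> (\<Sum>j\<in>{K div 2 + 1..K}. alpha j)" using each by (intro sum_mono)
  finally show ?thesis .
qed

lemma alphaK_le_if_early:
  assumes i: "1 \<le> i" "2 * i \<le> K"
  shows "alphaK i \<le> 1 / (real K)\<^sup>2"
proof -
  define J where "J = {K div 2 + 1..K}"
  have factor: "0 \<le> 1 - alpha j \<and> 1 - alpha j \<le> 1" if "1 \<le> j" for j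
    using alpha_pos[OF that] alpha_le_1[OF that] by auto
  have "alphaK i \<le> (\<Prod>j\<in>{i+1..K}. 1 - alpha j)"
    unfolding alphaK_def using alpha_pos[OF i(1)] alpha_le_1[OF i(1)] factor
    by (intro mult_left_le_one_le prod_nonneg) auto
  also have "\<dots> = (\<Prod>j\<in>{i+1..K} - J. 1 - alpha j) * (\<Prod>j\<in>J. 1 - alpha j)"
    using i by (intro prod.subset_diff) (auto simp: J_def)
  also have "\<dots> \<le> (\<Prod>j\<in>J. 1 - alpha j)"
    using factor i by (intro mult_left_le_one_le prod_le_1 prod_nonneg) (auto simp: J_def)
  also have "\<dots> \<le> exp (- (\<Sum>j\<in>J. alpha j))"
    using alpha_le_1 by (intro prod_one_minus_le_exp_neg_sum) (auto simp: J_def)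
  also have "\<dots> \<le> exp (- (2 * ln (real K)))"
  proof -
    have "8 * ln (real K) \<le> c_alpha * ln (real K)"
      using c_alpha_ge_24 ln_K_ge by (intro mult_right_mono) auto
    then show ?thesis using late_alpha_sum_ge unfolding J_def c_lnK_def by simp
  qed
  also have "\<dots> = 1 / (real K)\<^sup>2"
    using K_ge_2 exp_of_nat_mult[of 2 "ln (real K)"] by (simp add: exp_minus inverse_eq_divide)
  finally show ?thesis .
qed

lemma two_div_K_le_bonus: "2 / real K \<le> bfac"
proof (rule le_bonus_if_sq_le)
  have "(2 / real K)\<^sup>2 = 4 / (real K * real K)" by (simp add: power2_eq_square)
  also have "\<dots> \<le> 4 / (real K * real H)"
    using H_le_K H_pos K_ge_2 by (intro divide_left_mono mult_left_mono mult_pos_pos) auto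
  also have "\<dots> \<le> c_b\<^sup>2 * iota ^ 3 / (real K * real H)"
  proof (intro divide_right_mono)
    have "2\<^sup>2 * 1 \<le> c_b\<^sup>2 * iota ^ 3"
      using c_b_ge c_alpha_ge_24 iota_ge_1 by (intro mult_mono power_mono one_le_power) auto
    then show "4 \<le> c_b\<^sup>2 * iota ^ 3" by simp
  qed simp
  finally show "(2 / real K)\<^sup>2 \<le> c_b\<^sup>2 * (iota ^ 3 / (real K * real H))" by simp
qed

lemma early_alphaK_sum_le: "(\<Sum>i\<in>{i\<in>{1..K}. 2 * i \<le> K}. alphaK i) \<le> bfac / 2"
proof -
  have "(\<Sum>i\<in>{i\<in>{1..K}. 2 * i \<le> K}. alphaK i) \<le> (\<Sum>i\<in>{i\<in>{1..K}. 2 * i \<le> K}. 1 / (real K)\<^sup>2)"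
    using alphaK_le_if_early by (intro sum_mono) auto
  also have "\<dots> \<le> real K * (1 / (real K)\<^sup>2)"
  proof -
    have "card {i\<in>{1..K}. 2 * i \<le> K} \<le> card {1..K}" by (intro card_mono) auto
    then show ?thesis by (simp add: divide_right_mono)
  qed
  also have "\<dots> = 1 / real K" using K_ge_2 by (simp add: power2_eq_square)
  finally show ?thesis using two_div_K_le_bonus by simp
qed

lemma late_rate_weight_sq_le:
  assumes i: "K < 2 * i" "i \<le> K"
  shows "(rate i * weight i)\<^sup>2 \<le> 32 * c_alpha * (ln (real K))\<^sup>2 / (real H * real K)"
proof -
  have i2: "2 \<le> i" using i K_ge_2 by simp
  define x where "x = real i - 1"
  define c where "c = c_lnK"
  have x: "1 \<le> x" "x \<le> real K" "real K / 4 \<le> x" using i i2 by (auto simp: x_def)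
  have c: "2 \<le> c" "c \<le> real K" using c_lnK_ge c_lnK_le_K by (auto simp: c_def)
  have alpha_i: "alpha i = c / (x + c)" and alpha_i1: "alpha (i - 1) = c / (x - 1 + c)"
    using i2 by (simp_all add: alpha_eq x_def c_def of_nat_diff)
  have "rate i * weight i = eta i * (alpha i / (1 - alpha i))"
    using decay_Suc[of "i - 1"] i2 decay_pos[of "i - 1"] by (simp add: rate_eq weight_def)
  also have "alpha i / (1 - alpha i) = c / x"
  proof -
    have "1 - c / (x + c) = x / (x + c)" using x c by (simp add: field_simps)
    then show ?thesis unfolding alpha_i using x c by simp
  qed
  finally have rw: "rate i * weight i = eta i * (c / x)" .
  have "(rate i * weight i)\<^sup>2 = ln (real K) / ((c / (x - 1 + c)) * real H) * (c / x)\<^sup>2"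
    unfolding rw power_mult_distrib eta_sq[OF i2] alpha_i1 ..
  also have "\<dots> = ln (real K) * c * (x - 1 + c) / (real H * x\<^sup>2)"
    using x c H_pos by (simp add: field_simps power2_eq_square)
  also have "\<dots> \<le> ln (real K) * c * (2 * real K) / (real H * ((real K)\<^sup>2 / 16))"
  proof (rule frac_le)
    show "0 \<le> ln (real K) * c * (2 * real K)" using ln_K_ge c by simp
    show "ln (real K) * c * (x - 1 + c) \<le> ln (real K) * c * (2 * real K)"
      using ln_K_ge c x by (intro mult_left_mono) auto
    show "0 < real H * ((real K)\<^sup>2 / 16)" using H_pos K_ge_2 by simp
    have "(real K / 4)\<^sup>2 \<le> x\<^sup>2" using x K_ge_2 by (intro power_mono) auto
    then show "real H * ((real K)\<^sup>2 / 16) \<le> real H * x\<^sup>2"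
      using H_pos by (intro mult_left_mono) (auto simp: power_divide)
  qed
  also have "\<dots> = 32 * c_alpha * (ln (real K))\<^sup>2 / (real H * real K)"
    using K_ge_2 H_pos by (simp add: c_def c_lnK_def field_simps power2_eq_square)
  finally show ?thesis .
qed

lemma late_rate_weight_le:
  assumes i: "K < 2 * i" "i \<le> K"
  shows "rate i * weight i \<le> bfac" and "rate i * weight i * real H \<le> 1"
proof -
  have lnK: "0 \<le> ln (real K)" using K_ge_2 by simp
  have "(rate i * weight i)\<^sup>2 \<le> 32 * c_alpha * (ln (real K))\<^sup>2 / (real H * real K)"
    using late_rate_weight_sq_le[OF i] .
  also have "\<dots> \<le> c_b\<^sup>2 * (iota ^ 3 / (real K * real H))"
  proof -
    have "32 * c_alpha * (ln (real K))\<^sup>2 \<le> c_b\<^sup>2 * iota ^ 3"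
      using c_b_sq_ge sq_le_iota_pow[OF lnK ln_K_le_iota, of 3] c_alpha_ge_24 by (intro mult_mono) auto
    from divide_right_mono[OF this, of "real H * real K"] show ?thesis by (simp add: mult.commute)
  qed
  finally show "rate i * weight i \<le> bfac" by (rule le_bonus_if_sq_le)
  have "(rate i * weight i * real H)\<^sup>2 = (rate i * weight i)\<^sup>2 * (real H)\<^sup>2"
    by (simp only: power_mult_distrib)
  also have "\<dots> \<le> 32 * c_alpha * (ln (real K))\<^sup>2 / (real H * real K) * (real H)\<^sup>2"
    using late_rate_weight_sq_le[OF i] by (intro mult_right_mono) auto
  also have "\<dots> = 32 * c_alpha * real H * (ln (real K))\<^sup>2 / real K"
    using H_pos by (simp add: field_simps power2_eq_square)
  also have "\<dots> \<le> 32 * c_alpha * real H * iota ^ 4 / real K"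
    using sq_le_iota_pow[OF lnK ln_K_le_iota, of 4] c_alpha_ge_24
    by (intro divide_right_mono mult_left_mono) auto
  also have "\<dots> \<le> 1" using K_large_iota K_ge_2 by simp
  finally have "(rate i * weight i * real H)\<^sup>2 \<le> 1\<^sup>2" by simp
  then show "rate i * weight i * real H \<le> 1" by (rule power2_le_imp_le) simp
qed

lemma ln_A_term_le: "decay K * ln (real A) / rate K \<le> bfac * real H / 2"
proof -
  have lnA: "0 \<le> ln (real A)" using A_pos by simp
  have K: "1 \<le> K - 1" "2 \<le> K" using K_ge_2 by auto
  have "decay K * ln (real A) / rate K = (1 - alpha K) * (ln (real A) / eta K)"
    using decay_Suc[OF K(1)] rate_eq[OF K(2)] decay_pos[of "K - 1"] eta_pos[OF K(2)] K by simp
  also have "\<dots> \<le> ln (real A) / eta K"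
    using alpha_pos[of K] alpha_le_1[of K] lnA eta_pos[OF K(2)] K by (intro mult_left_le_one_le) auto
  also have "\<dots> \<le> bfac * real H / 2"
  proof (rule power2_le_imp_le)
    define d where "d = real K - 2 + c_lnK"
    have d: "0 < d" using K c_lnK_ge by (simp add: d_def)
    have "alpha (K - 1) = c_lnK / d" using K by (simp add: alpha_eq d_def of_nat_diff)
    then have "(ln (real A) / eta K)\<^sup>2 = (ln (real A))\<^sup>2 * (c_lnK / d * real H) / ln (real K)"
      using eta_sq[OF K(2)] by (simp add: power_divide)
    also have "\<dots> = (ln (real A))\<^sup>2 * c_alpha * real H / d"
      using d ln_K_ge by (simp add: c_lnK_def field_simps)
    also have "\<dots> \<le> (ln (real A))\<^sup>2 * c_alpha * real H / real K"
      using d c_lnK_ge c_alpha_ge_24 K by (intro divide_left_mono) (auto simp: d_def)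
    also have "\<dots> = (ln (real A))\<^sup>2 * (4 * c_alpha) * (real H / (4 * real K))"
      by simp
    also have "\<dots> \<le> iota ^ 3 * c_b\<^sup>2 * (real H / (4 * real K))"
      using sq_le_iota_pow[OF lnA ln_A_le_iota, of 3] c_b_sq_ge c_alpha_ge_24 iota_ge_1
      by (intro mult_right_mono mult_mono) auto
    also have "\<dots> = c_b\<^sup>2 * (iota ^ 3 / (real K * real H)) * (real H)\<^sup>2 / 4"
      using H_pos K by (simp add: field_simps power2_eq_square)
    also have "\<dots> = (bfac * real H / 2)\<^sup>2"
      by (simp add: bonus_sq power_mult_distrib power_divide)
    finally show "(ln (real A) / eta K)\<^sup>2 \<le> (bfac * real H / 2)\<^sup>2" .
    show "0 \<le> bfac * real H / 2" using bonus_nonneg by simp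
  qed
  finally show ?thesis .
qed

section \<open>Optimism\<close>

lemma sum_mgf_term_le:
  assumes q: "\<And>k a. 1 \<le> k \<Longrightarrow> k \<le> K \<Longrightarrow> a < A \<Longrightarrow>
    0 \<le> qb h wh Vb k s a \<and> qb h wh Vb k s a \<le> real H"
  shows "(\<Sum>k=1..K. decay K * mgf_term h wh Vb k s)
    \<le> bfac * real H / 2 + bfac * (\<Sum>k=1..K. alphaK k * varp A (mu h wh Vb k s) (qb h wh Vb k s))"
proof -
  define V where "V k = varp A (mu h wh Vb k s) (qb h wh Vb k s)" for k
  have V0: "0 \<le> V k" if "1 \<le> k" for k
    unfolding V_def varp_def using mu_nonneg[OF that] by (intro sum_nonneg mult_nonneg_nonneg) auto
  have each: "decay K * mgf_term h wh Vb k s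
      \<le> (if 2 * k \<le> K then alphaK k * real H else 0) + bfac * (alphaK k * V k)"
    if k: "k \<in> {1..K}" for k
  proof (cases "2 * k \<le> K")
    case True
    have "decay K * mgf_term h wh Vb k s \<le> alphaK k * real H"
      using k q by (intro decay_mgf_term_le_range) auto
    moreover have "0 \<le> bfac * (alphaK k * V k)"
      using k bonus_nonneg alphaK_nonneg[of k] V0[of k] by (intro mult_nonneg_nonneg) auto
    ultimately show ?thesis using True by simp
  next
    case False
    then have small: "rate k * weight k \<le> bfac" "rate k * weight k * real H \<le> 1"
      using late_rate_weight_le k by auto
    have "decay K * mgf_term h wh Vb k s \<le> alphaK k * (rate k * weight k) * V k"
      using decay_mgf_term_le_variance[of k] q k small by (auto simp: V_def)
    also have "\<dots> \<le> alphaK k * bfac * V k"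
      using small alphaK_nonneg[of k] V0[of k] k by (intro mult_right_mono mult_left_mono) auto
    finally show ?thesis using False by (simp add: mult_ac)
  qed
  have "(\<Sum>k=1..K. decay K * mgf_term h wh Vb k s)
      \<le> (\<Sum>k=1..K. (if 2 * k \<le> K then alphaK k * real H else 0) + bfac * (alphaK k * V k))"
    using each by (intro sum_mono)
  also have "\<dots> = (\<Sum>k\<in>{k\<in>{1..K}. 2 * k \<le> K}. alphaK k) * real H + bfac * (\<Sum>k=1..K. alphaK k * V k)"
  proof -
    have "(\<Sum>k=1..K. if 2 * k \<le> K then alphaK k * real H else 0)
        = (\<Sum>k\<in>{k\<in>{1..K}. 2 * k \<le> K}. alphaK k * real H)"
      by (rule sum.inter_filter[symmetric]) simp
    then show ?thesis by (simp add: sum.distrib sum_distrib_left sum_distrib_right)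
  qed
  also have "\<dots> \<le> bfac / 2 * real H + bfac * (\<Sum>k=1..K. alphaK k * V k)"
    using early_alphaK_sum_le by (intro add_right_mono mult_right_mono) auto
  finally show ?thesis by (simp add: V_def)
qed

lemma regret_le_bonus:
  assumes q: "\<And>k a. 1 \<le> k \<Longrightarrow> k \<le> K \<Longrightarrow> a < A \<Longrightarrow>
    0 \<le> qb h wh Vb k s a \<and> qb h wh Vb k s a \<le> real H"
    and a: "a < A"
  shows "(\<Sum>k=1..K. alphaK k * qb h wh Vb k s a)
    \<le> (\<Sum>k=1..K. alphaK k * (\<Sum>a<A. mu h wh Vb k s a * qb h wh Vb k s a))
      + bfac * (\<Sum>k=1..K. alphaK k * (varp A (mu h wh Vb k s) (qb h wh Vb k s) + real H))"
proof -
  have "bfac * (\<Sum>k=1..K. alphaK k * (varp A (mu h wh Vb k s) (qb h wh Vb k s) + real H))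
      = bfac * (\<Sum>k=1..K. alphaK k * varp A (mu h wh Vb k s) (qb h wh Vb k s)) + bfac * real H"
    using alphaK_sum by (simp add: distrib_left sum.distrib sum_distrib_right[symmetric])
  moreover have "(\<Sum>k=1..K. decay K * mgf_term h wh Vb k s)
    \<le> bfac * real H / 2 + bfac * (\<Sum>k=1..K. alphaK k * varp A (mu h wh Vb k s) (qb h wh Vb k s))"
    using q by (rule sum_mgf_term_le)
  ultimately show ?thesis
    using weighted_regret_le[where h = h and wh = wh and Vb = Vb and s = s, OF a] ln_A_term_le
    by linarith
qed

lemma qb_range:
  assumes "\<And>s. 0 \<le> Vb s \<and> Vb s \<le> real H - real h"
  shows "0 \<le> qb h wh Vb k s a \<and> qb h wh Vb k s a \<le> real H - real h + 1"
  unfolding qb_def using reward_range[of h s a "fst (fst (wh k) s a)"] assms[of "snd (fst (wh k) s a)"]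
  by linarith

lemma Vbar_step_range:
  assumes Vb: "\<And>s. 0 \<le> Vb s \<and> Vb s \<le> real H - real h"
  shows "0 \<le> Vbar_step h wh Vb s" "Vbar_step h wh Vb s \<le> real H - real h + 1"
proof -
  have "0 \<le> (\<Sum>k=1..K. alphaK k * (\<Sum>a<A. mu h wh Vb k s a * qb h wh Vb k s a))"
    using alphaK_nonneg mu_nonneg qb_range[OF Vb] by (intro sum_nonneg mult_nonneg_nonneg) auto
  moreover have "0 \<le> bfac * (\<Sum>k=1..K. alphaK k * (varp A (mu h wh Vb k s) (qb h wh Vb k s) + real H))"
    using alphaK_nonneg mu_nonneg bonus_nonneg unfolding varp_def
    by (intro sum_nonneg mult_nonneg_nonneg add_nonneg_nonneg) auto
  ultimately show "0 \<le> Vbar_step h wh Vb s" using Vb[of 0] by (simp add: Vbar_step_def)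
  show "Vbar_step h wh Vb s \<le> real H - real h + 1" by (simp add: Vbar_step_def)
qed

lemma Max_le_Vbar_step:
  assumes h: "1 \<le> h" and Vb: "\<And>s. 0 \<le> Vb s \<and> Vb s \<le> real H - real h" and Vs: "\<And>s. Vs s \<le> Vb s"
  shows "Max ((\<lambda>a. \<Sum>k=1..K. alphaK k * (r h s a (fst (fst (wh k) s a)) + Vs (snd (fst (wh k) s a)))) ` {..<A})
    \<le> Vbar_step h wh Vb s"
proof -
  define F where "F a = (\<Sum>k=1..K. alphaK k * (r h s a (fst (fst (wh k) s a)) + Vs (snd (fst (wh k) s a))))" for a
  have F_le_q: "F a \<le> (\<Sum>k=1..K. alphaK k * qb h wh Vb k s a)" for a
    unfolding F_def qb_def using alphaK_nonneg Vs by (intro sum_mono mult_left_mono) auto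
  have F_le_H: "F a \<le> real H - real h + 1" for a
  proof -
    have "F a \<le> (\<Sum>k=1..K. alphaK k * qb h wh Vb k s a)" by (rule F_le_q)
    also have "\<dots> \<le> (\<Sum>k=1..K. alphaK k * (real H - real h + 1))"
      using alphaK_nonneg qb_range[OF Vb] by (intro sum_mono mult_left_mono) auto
    also have "\<dots> = real H - real h + 1" using alphaK_sum by (simp add: sum_distrib_right[symmetric])
    finally show ?thesis .
  qed
  have q: "0 \<le> qb h wh Vb k s a \<and> qb h wh Vb k s a \<le> real H" for k a
    using qb_range[where Vb = Vb and h = h and wh = wh and k = k and s = s and a = a, OF Vb] h by auto
  have "F a \<le> Vbar_step h wh Vb s" if "a < A" for a
    using F_le_q[of a] F_le_H[of a] regret_le_bonus[OF q that] unfolding Vbar_step_def by linarith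
  then show ?thesis using A_pos unfolding F_def[symmetric] by (simp add: Max_le_iff lessThan_empty_iff)
qed

lemma Vnext_optimistic:
  "j \<le> H \<Longrightarrow> 0 \<le> fst (Vnext w j) s \<and> fst (Vnext w j) s \<le> real j \<and> Vstar_n w j s \<le> fst (Vnext w j) s"
proof (induction j arbitrary: s)
  case 0
  then show ?case by simp
next
  case (Suc j)
  define h where "h = H - j"
  have h: "1 \<le> h" "real H - real h = real j" using Suc.prems by (auto simp: h_def of_nat_diff)
  have Vb: "\<And>s. 0 \<le> fst (Vnext w j) s \<and> fst (Vnext w j) s \<le> real H - real h"
    using Suc h by auto
  have Vs: "\<And>s. Vstar_n w j s \<le> fst (Vnext w j) s" using Suc by auto
  have "0 \<le> Vbar_step h (w h) (fst (Vnext w j)) s"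
    "Vbar_step h (w h) (fst (Vnext w j)) s \<le> real H - real h + 1"
    using Vbar_step_range[where Vb = "fst (Vnext w j)", OF Vb] by auto
  moreover have "Max ((\<lambda>a. \<Sum>k=1..K. alphaK k * (r h s a (fst (fst (w h k) s a))
      + Vstar_n w j (snd (fst (w h k) s a)))) ` {..<A}) \<le> Vbar_step h (w h) (fst (Vnext w j)) s"
    using Max_le_Vbar_step[where Vb = "fst (Vnext w j)" and Vs = "Vstar_n w j", OF h(1) Vb Vs] .
  ultimately show ?case using h by (simp add: h_def[symmetric])
qed

lemma Vstar_le_Vbar: "h \<in> {1..H} \<Longrightarrow> Vstar w h s \<le> Vbar w h s"
  using Vnext_optimistic[of "H + 1 - h" w s] by (auto simp: Vbar_def Vstar_def)

end

theorem lemma3: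
  fixes c_alpha :: real
  assumes "c_alpha \<ge> 24"
  shows "\<exists>c_k > 0. \<exists>c_b0 > 0. \<forall>(S::nat) (A::nat) (B::nat) (H::nat) (K::nat) (\<delta>::real) (c_b::real)
           (r :: nat \<Rightarrow> nat \<Rightarrow> nat \<Rightarrow> nat \<Rightarrow> real) (P :: nat \<Rightarrow> nat \<Rightarrow> nat \<Rightarrow> nat \<Rightarrow> nat pmf).
      S \<ge> 1 \<longrightarrow> A \<ge> 1 \<longrightarrow> B \<ge> 1 \<longrightarrow> H \<ge> 1 \<longrightarrow> K \<ge> 1 \<longrightarrow>
      0 < \<delta> \<longrightarrow> \<delta> < 1 \<longrightarrow>
      (\<forall>h s a b. 0 \<le> r h s a b \<and> r h s a b \<le> 1) \<longrightarrow>
      (\<forall>h s a b. s < S \<longrightarrow> a < A \<longrightarrow> b < B \<longrightarrow> set_pmf (P h s a b) \<subseteq> {..<S}) \<longrightarrow>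
      real K \<ge> c_k * real H * (ln (real K * real S * (real A + real B) / \<delta>)) ^ 4 \<longrightarrow>
      c_b \<ge> c_b0 \<longrightarrow>
      measure_pmf.prob (nashq.alg_pmf S A B H K c_alpha c_b \<delta> r P)
        {w. \<forall>h\<in>{1..H}. \<forall>s<S. nashq.Vbar S A B H K c_alpha c_b \<delta> r w h s \<ge> nashq.Vstar A H K c_alpha r w h s}
      \<ge> 1 - \<delta>"
proof (rule exI[of _ "32 * c_alpha"], intro conjI exI[of _ "2 * c_alpha"] allI impI)
  show "0 < 32 * c_alpha" "0 < 2 * c_alpha" using assms by auto
  fix S A B H K :: nat and \<delta> c_b :: real
    and r :: "nat \<Rightarrow> nat \<Rightarrow> nat \<Rightarrow> nat \<Rightarrow> real" and P :: "nat \<Rightarrow> nat \<Rightarrow> nat \<Rightarrow> nat \<Rightarrow> nat pmf"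
  assume sizes: "S \<ge> 1" "A \<ge> 1" "B \<ge> 1" "H \<ge> 1" "K \<ge> 1" and \<delta>: "0 < \<delta>" "\<delta> < 1"
    and rewards: "\<forall>h s a b. 0 \<le> r h s a b \<and> r h s a b \<le> 1"
    and "\<forall>h s a b. s < S \<longrightarrow> a < A \<longrightarrow> b < B \<longrightarrow> set_pmf (P h s a b) \<subseteq> {..<S}"
    and large: "real K \<ge> 32 * c_alpha * real H * (ln (real K * real S * (real A + real B) / \<delta>)) ^ 4"
    and "c_b \<ge> 2 * c_alpha"
  have "2 \<le> K"
    using two_le_K_if_large[OF sizes(5,1,2,3) \<delta>(1) _ sizes(4) assms large] \<delta>(2) by simp
  then interpret nashq_large S A B H K c_alpha c_b \<delta> r P
    using assms sizes \<delta> rewards large \<open>c_b \<ge> 2 * c_alpha\<close> by unfold_locales auto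
  have "{w. \<forall>h\<in>{1..H}. \<forall>s<S. Vbar w h s \<ge> Vstar w h s} = UNIV" using Vstar_le_Vbar by blast
  then show "measure_pmf.prob alg_pmf {w. \<forall>h\<in>{1..H}. \<forall>s<S. Vbar w h s \<ge> Vstar w h s} \<ge> 1 - \<delta>"
    using \<delta> by simp
qed

end
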